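(* Let $N\geq2$ and $1<\alpha<N$. There exists a constant $\xi=\xi(\alpha,N)>0$ such that every measurable set $E\subseteq\mathbb R^N$ with $|E|=\omega_N$ and $\delta(E)\geq2(\omega_N-\xi)$ satisfies \[ D(E)>\frac{\omega_N^2}{5^N}\Big(1-\frac1{2^{N-\alpha}}\Big)\,. \]
   Context: $B$ is the open unit ball centered at the origin, $\omega_N=|B|$, $B_x$ the open unit ball centered at $x$. For measurable $E$ of finite measure, $\mathfrak F(E)=\int_E\int_E|y-x|^{-(N-\alpha)}\,dy\,dx$, $D(E)=\mathfrak F(B)-\mathfrak F(E)$, $\delta(E)=\inf_{x\in\mathbb R^N}|B_x\Delta E|$. *)

theory Defs
  imports "HOL-Analysis.Analysis"
begin

text \<open>It is finite for sets of finite measure when alpha > 0; we take its real value.\<close>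
definition rieszF :: "real \<Rightarrow> (real ^ 'n :: finite) set \<Rightarrow> real" where
  "rieszF \<alpha> E = enn2real (\<integral>\<^sup>+ x. \<integral>\<^sup>+ y.
      ennreal (indicator E x * indicator E y * norm (y - x) powr (- (real CARD('n) - \<alpha>))) \<partial>lebesgue \<partial>lebesgue)"

definition deficit :: "real \<Rightarrow> (real ^ 'n :: finite) set \<Rightarrow> real" where
  "deficit \<alpha> E = rieszF \<alpha> (ball (0 :: real ^ 'n) 1) - rieszF \<alpha> E"

definition asym :: "(real ^ 'n :: finite) set \<Rightarrow> real" where
  "asym E = (INF x. measure lebesgue ((ball x 1 - E) \<union> (E - ball x 1)))"

end

theory Submission
  imports Defs
begin

(*
  Points of the unit ball are at distance less than 2, so F(B) >= 2 powr -(N - alpha) * omega_N^2,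
  which already exceeds the claimed bound. On the other hand delta(E) >= 2 (omega_N - xi) forces
  |E n B_a| <= xi for every unit ball B_a, and a set spread out like this has small energy.
  Splitting the kernel dyadically, the Riesz potential of E at x is at most R powr -(N - alpha) |E|
  (far field), plus |E n B_R(x)| <= (number of unit balls covering B_R) * xi, plus
  sum_k 2 powr ((k + 1) (N - alpha)) |E n B_(2^-k)(x)|; interpolating
  |E n B_r| <= min xi (omega_N r^N) turns the last sum into a geometric series of size
  O(xi powr (alpha / 2N)). Taking R large and then xi small makes F(E) < F(B) - bound.
*)

lemma norm_powr_neg_le_dyadic:
  fixes z :: "'a::real_normed_vector"
  assumes s: "s > 0" and R: "R \<ge> 1"
  shows "ennreal (norm z powr (-s)) \<le> ennreal (R powr (-s)) + indicator (ball 0 R) z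
     + (\<Sum>k. ennreal (2 powr ((real k + 1) * s)) * indicator (ball 0 (1 / 2 ^ k)) z)"
    (is "_ \<le> ?far + ?mid + ?near")
proof -
  have parts: "?far \<le> ?far + ?mid + ?near" "?mid \<le> ?far + ?mid + ?near" "?near \<le> ?far + ?mid + ?near"
    by (simp_all add: add_increasing add_increasing2)
  consider "z = 0" | "norm z \<ge> R" | "1 \<le> norm z" "norm z < R" | "0 < norm z" "norm z < 1"
    by force
  then show ?thesis
  proof cases
    case 2
    then have "norm z powr (-s) \<le> R powr (-s)"
      using R s by (intro powr_mono2') auto
    then show ?thesis
      using parts(1) by (meson ennreal_leI order_trans)
  next
    case 3
    then have "norm z powr (-s) \<le> 1 powr (-s)"
      using s by (intro powr_mono2') auto
    then have "ennreal (norm z powr (-s)) \<le> ?mid"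
      using 3 by (simp add: indicator_def)
    then show ?thesis
      using parts(2) by (rule order_trans)
  next
    case 4
    define t where "t = - log 2 (norm z)"
    define k where "k = nat \<lceil>t\<rceil> - 1"
    have t: "t > 0" and z_eq: "norm z = 2 powr (-t)"
      using 4 by (simp_all add: t_def)
    have k: "real k < t" "t \<le> real k + 1"
      using t unfolding k_def by simp_all linarith+
    have "norm z powr (-s) = 2 powr (t * s)"
      using z_eq by (simp add: powr_powr)
    also have "\<dots> \<le> 2 powr ((real k + 1) * s)"
      using k s by (intro powr_mono) auto
    finally have "norm z powr (-s) \<le> 2 powr ((real k + 1) * s)" .
    moreover have "norm z < 2 powr (- real k)"
      using z_eq k by simp
    then have "z \<in> ball 0 (1 / 2 ^ k)"
      by (simp add: powr_minus_divide powr_realpow)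
    ultimately have "ennreal (norm z powr (-s))
        \<le> ennreal (2 powr ((real k + 1) * s)) * indicator (ball 0 (1 / 2 ^ k)) z"
      by (simp add: ennreal_leI)
    also have "\<dots> \<le> ?near"
      using sum_le_suminf[OF summableI, of "{k}"] by simp
    finally show ?thesis
      using parts(3) by (rule order_trans)
  qed simp
qed

lemma le_powr_interpolate:
  fixes m a b \<theta> :: real
  assumes "0 \<le> m" "m \<le> a" "m \<le> b" "0 \<le> \<theta>" "\<theta> \<le> 1"
  shows "m \<le> a powr \<theta> * b powr (1 - \<theta>)"
proof (cases "m = 0")
  case False
  then have "m = m powr \<theta> * m powr (1 - \<theta>)"
    using assms by (simp add: powr_add[symmetric])
  also have "\<dots> \<le> a powr \<theta> * b powr (1 - \<theta>)"
    using assms by (intro mult_mono powr_mono2) auto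
  finally show ?thesis .
qed simp

lemma dyadic_sum_le_geometric:
  fixes m :: "nat \<Rightarrow> real" and \<xi> w \<alpha> :: real and N :: nat
  assumes \<alpha>: "0 < \<alpha>" "\<alpha> < N" and m: "\<And>k. 0 \<le> m k" "\<And>k. m k \<le> \<xi>" "\<And>k. m k \<le> w * (1 / 2 ^ k) ^ N"
  defines "\<theta> \<equiv> \<alpha> / (2 * N)" and "q \<equiv> 2 powr (- \<alpha> / 2)"
  shows "(\<Sum>k. ennreal (2 powr ((real k + 1) * (N - \<alpha>))) * ennreal (m k))
    \<le> ennreal (2 powr (N - \<alpha>) * \<xi> powr \<theta> * w powr (1 - \<theta>) / (1 - q))"
proof -
  define c where "c = 2 powr (N - \<alpha>) * \<xi> powr \<theta> * w powr (1 - \<theta>)"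
  have \<theta>: "0 \<le> \<theta>" "\<theta> \<le> 1"
    using \<alpha> by (auto simp: \<theta>_def field_simps)
  have "q < 2 powr 0"
    unfolding q_def using \<alpha> by (intro powr_less_mono) auto
  then have q: "0 \<le> q" "q < 1"
    by (auto simp: q_def)
  have w: "0 \<le> w"
    using m(1)[of 0] m(3)[of 0] by simp
  have term_le: "2 powr ((real k + 1) * (N - \<alpha>)) * m k \<le> c * q ^ k" for k
  proof -
    have "m k \<le> \<xi> powr \<theta> * (w * 2 powr (- real k * N)) powr (1 - \<theta>)"
      using le_powr_interpolate[OF m(1,2,3) \<theta>, of k]
      by (simp add: powr_minus_divide powr_realpow[symmetric] powr_powr power_one_over)
    also have "\<dots> = \<xi> powr \<theta> * w powr (1 - \<theta>) * 2 powr (- real k * N * (1 - \<theta>))"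
      using w by (simp add: powr_mult powr_powr)
    finally have "2 powr ((real k + 1) * (N - \<alpha>)) * m k \<le> 2 powr ((real k + 1) * (N - \<alpha>))
        * (\<xi> powr \<theta> * w powr (1 - \<theta>) * 2 powr (- real k * N * (1 - \<theta>)))"
      by (rule mult_left_mono) simp
    also have "\<dots> = \<xi> powr \<theta> * w powr (1 - \<theta>) * 2 powr ((real k + 1) * (N - \<alpha>) + - real k * N * (1 - \<theta>))"
      by (simp only: powr_add mult_ac)
    also have "(real k + 1) * (N - \<alpha>) + - real k * N * (1 - \<theta>) = (N - \<alpha>) + real k * (- \<alpha> / 2)"
      using \<alpha> by (simp add: \<theta>_def field_simps)
    also have "2 powr \<dots> = 2 powr (N - \<alpha>) * 2 powr (real k * (- \<alpha> / 2))"
      by (rule powr_add)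
    also have "2 powr (real k * (- \<alpha> / 2)) = q ^ k"
      by (simp add: q_def powr_realpow[symmetric] powr_powr mult.commute)
    finally show ?thesis
      by (simp add: c_def mult_ac)
  qed
  have "(\<Sum>k. ennreal (2 powr ((real k + 1) * (N - \<alpha>))) * ennreal (m k))
      \<le> (\<Sum>k. ennreal (c * q ^ k))"
    using m(1) term_le by (intro suminf_le summableI) (simp add: ennreal_mult[symmetric] ennreal_leI)
  also have "\<dots> = ennreal (\<Sum>k. c * q ^ k)"
    using q by (intro suminf_ennreal2) (auto simp: c_def intro!: summable_mult summable_geometric)
  also have "(\<Sum>k. c * q ^ k) = c / (1 - q)"
    using q by (simp add: suminf_mult suminf_geometric summable_geometric divide_simps)
  finally show ?thesis
    by (simp add: c_def)
qed

lemma finite_unit_ball_cover: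
  "\<exists>C::'a::euclidean_space set. finite C \<and> (\<forall>x. ball x R \<subseteq> (\<Union>c\<in>C. ball (x + c) 1))"
proof -
  have cover: "cball 0 R \<subseteq> (\<Union>c\<in>UNIV. ball c 1)"
    by (blast intro: centre_in_ball[THEN iffD2, OF zero_less_one])
  obtain C :: "'a set" where C: "finite C" "cball 0 R \<subseteq> (\<Union>c\<in>C. ball c 1)"
    by (metis compactE_image[OF compact_cball _ cover] open_ball)
  have "ball x R \<subseteq> (\<Union>c\<in>C. ball (x + c) 1)" for x
  proof
    fix y assume "y \<in> ball x R"
    then have "y - x \<in> cball 0 R"
      by (simp add: dist_norm norm_minus_commute)
    then obtain c where "c \<in> C" "dist c (y - x) < 1"
      using C(2) by auto
    then show "y \<in> (\<Union>c\<in>C. ball (x + c) 1)"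
      by (auto simp: dist_norm algebra_simps)
  qed
  with C(1) show ?thesis by blast
qed

lemma emeasure_Int_ball_le_card_cover:
  fixes E C :: "'a::euclidean_space set" and \<xi> :: real
  assumes E: "E \<in> sets lebesgue" and \<xi>: "\<xi> \<ge> 0" "\<And>a. emeasure lebesgue (E \<inter> ball a 1) \<le> ennreal \<xi>"
    and C: "finite C" "ball x R \<subseteq> (\<Union>c\<in>C. ball (x + c) 1)"
  shows "emeasure lebesgue (E \<inter> ball x R) \<le> ennreal (card C * \<xi>)"
proof -
  have "emeasure lebesgue (E \<inter> ball x R) \<le> emeasure lebesgue (\<Union>c\<in>C. E \<inter> ball (x + c) 1)"
    using E C by (intro emeasure_mono sets.finite_UN) auto
  also have "\<dots> \<le> (\<Sum>c\<in>C. emeasure lebesgue (E \<inter> ball (x + c) 1))"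
    using E C(1) by (intro emeasure_subadditive_finite) auto
  also have "\<dots> \<le> (\<Sum>c\<in>C. ennreal \<xi>)"
    by (intro sum_mono \<xi>(2))
  finally show ?thesis
    using \<xi>(1) by (simp add: ennreal_mult ennreal_of_nat_eq_real_of_nat)
qed

lemma measure_symmetric_difference:
  assumes "A \<in> fmeasurable M" "B \<in> fmeasurable M"
  shows "measure M ((A - B) \<union> (B - A)) = measure M A + measure M B - 2 * measure M (A \<inter> B)"
proof -
  have "measure M (B - A) = measure M B - measure M (A \<inter> B)"
    using measure_Un2[OF assms] measure_Un3[OF assms] by simp
  moreover have "measure M (A - B) = measure M A - measure M (A \<inter> B)"
    using measure_Un2[OF assms(2,1)] measure_Un3[OF assms(2,1)] by (simp add: Un_commute Int_commute)
  moreover have "measure M ((A - B) \<union> (B - A)) = measure M (A - B) + measure M (B - A)"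
    using fmeasurable_Diff[OF assms(1) fmeasurableD[OF assms(2)]] fmeasurable_Diff[OF assms(2) fmeasurableD[OF assms(1)]]
    by (intro measure_Union) (auto simp: fmeasurable_def)
  ultimately show ?thesis
    by simp
qed

definition riesz_potential :: "real \<Rightarrow> 'a::euclidean_space set \<Rightarrow> 'a \<Rightarrow> ennreal" where
  "riesz_potential \<alpha> E x =
     (\<integral>\<^sup>+y. ennreal (indicator E y * norm (y - x) powr (- (real DIM('a) - \<alpha>))) \<partial>lebesgue)"

lemma riesz_potential_le_dyadic:
  fixes E :: "'a::euclidean_space set" and \<alpha> R :: real
  assumes E: "E \<in> sets lebesgue" and \<alpha>: "\<alpha> < DIM('a)" and R: "R \<ge> 1"
  defines "s \<equiv> real DIM('a) - \<alpha>"
  shows "riesz_potential \<alpha> E x \<le> ennreal (R powr (-s)) * emeasure lebesgue E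
     + emeasure lebesgue (E \<inter> ball x R)
     + (\<Sum>k. ennreal (2 powr ((real k + 1) * s)) * emeasure lebesgue (E \<inter> ball x (1 / 2 ^ k)))"
proof -
  have s: "s > 0"
    using \<alpha> by (simp add: s_def)
  have [measurable]: "E \<inter> ball x r \<in> sets lebesgue" for r
    using E by auto
  have "riesz_potential \<alpha> E x \<le> (\<integral>\<^sup>+y. ennreal (R powr (-s)) * indicator E y
      + indicator (E \<inter> ball x R) y
      + (\<Sum>k. ennreal (2 powr ((real k + 1) * s)) * indicator (E \<inter> ball x (1 / 2 ^ k)) y) \<partial>lebesgue)"
    unfolding riesz_potential_def s_def[symmetric]
  proof (intro nn_integral_mono)
    fix y
    have "indicator (ball 0 r) (y - x) = (indicator (ball x r) y :: ennreal)" for r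
      by (simp add: indicator_def dist_norm norm_minus_commute)
    then show "ennreal (indicator E y * norm (y - x) powr (-s)) \<le> ennreal (R powr (-s)) * indicator E y
      + indicator (E \<inter> ball x R) y
      + (\<Sum>k. ennreal (2 powr ((real k + 1) * s)) * indicator (E \<inter> ball x (1 / 2 ^ k)) y)"
      using norm_powr_neg_le_dyadic[OF s R, of "y - x"]
      by (cases "y \<in> E") (simp_all add: indicator_inter_arith)
  qed
  also have "\<dots> = ennreal (R powr (-s)) * emeasure lebesgue E
     + emeasure lebesgue (E \<inter> ball x R)
     + (\<Sum>k. ennreal (2 powr ((real k + 1) * s)) * emeasure lebesgue (E \<inter> ball x (1 / 2 ^ k)))"
    using E by (simp add: nn_integral_add nn_integral_suminf nn_integral_cmult_indicator)
  finally show ?thesis .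
qed

definition near_field_const :: "nat \<Rightarrow> real \<Rightarrow> real" where
  "near_field_const N \<alpha> = 2 powr (N - \<alpha>) * unit_ball_vol N powr (1 - \<alpha> / (2 * N)) / (1 - 2 powr (- \<alpha> / 2))"

lemma near_field_const_nonneg: "\<alpha> > 0 \<Longrightarrow> near_field_const N \<alpha> \<ge> 0"
  using powr_less_mono[of "- \<alpha> / 2" 0 2] by (simp add: near_field_const_def)

lemma riesz_potential_le:
  fixes E C :: "'a::euclidean_space set" and \<alpha> \<xi> R M :: real
  assumes E: "E \<in> sets lebesgue" "emeasure lebesgue E \<le> ennreal M" "M \<ge> 0"
    and \<alpha>: "0 < \<alpha>" "\<alpha> < DIM('a)" and R: "R \<ge> 1"
    and C: "finite C" "\<And>x. ball x R \<subseteq> (\<Union>c\<in>C. ball (x + c) 1)"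
    and \<xi>: "\<xi> \<ge> 0" "\<And>a. emeasure lebesgue (E \<inter> ball a 1) \<le> ennreal \<xi>"
  shows "riesz_potential \<alpha> E x \<le> ennreal (R powr - (DIM('a) - \<alpha>) * M + card C * \<xi>
           + near_field_const DIM('a) \<alpha> * \<xi> powr (\<alpha> / (2 * DIM('a))))"
proof -
  define m where "m k = measure lebesgue (E \<inter> ball x (1 / 2 ^ k))" for k
  have E_ball: "E \<inter> ball y r \<in> lmeasurable" for y r
    using fmeasurable_Int_fmeasurable[OF lmeasurable_ball E(1)] by (simp add: Int_commute)
  have em: "emeasure lebesgue (E \<inter> ball x (1 / 2 ^ k)) = ennreal (m k)" for k
    unfolding m_def using E_ball by (rule emeasure_eq_measure2)
  have m: "0 \<le> m k" "m k \<le> \<xi>" "m k \<le> unit_ball_vol DIM('a) * (1 / 2 ^ k) ^ DIM('a)" for k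
  proof -
    have "ennreal (m k) \<le> emeasure lebesgue (E \<inter> ball x 1)"
      unfolding em[symmetric] using E(1) subset_ball[of "1 / 2 ^ k" 1 x] by (intro emeasure_mono) auto
    then show "m k \<le> \<xi>"
      using \<xi> order_trans by (metis ennreal_le_iff)
    have "m k \<le> measure lebesgue (ball x (1 / 2 ^ k))"
      unfolding m_def using E_ball by (intro measure_mono_fmeasurable) auto
    then show "m k \<le> unit_ball_vol DIM('a) * (1 / 2 ^ k) ^ DIM('a)"
      by (simp add: content_ball)
  qed (simp add: m_def)
  have "riesz_potential \<alpha> E x \<le> ennreal (R powr - (DIM('a) - \<alpha>)) * emeasure lebesgue E
     + emeasure lebesgue (E \<inter> ball x R)
     + (\<Sum>k. ennreal (2 powr ((real k + 1) * (DIM('a) - \<alpha>))) * emeasure lebesgue (E \<inter> ball x (1 / 2 ^ k)))"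
    using riesz_potential_le_dyadic[OF E(1) \<alpha>(2) R] .
  also have "\<dots> \<le> ennreal (R powr - (DIM('a) - \<alpha>)) * ennreal M + ennreal (card C * \<xi>)
     + ennreal (near_field_const DIM('a) \<alpha> * \<xi> powr (\<alpha> / (2 * DIM('a))))"
    using dyadic_sum_le_geometric[OF \<alpha> m] emeasure_Int_ball_le_card_cover[OF E(1) \<xi> C(1,2)] E(2)
    by (intro add_mono mult_left_mono) (simp_all add: em near_field_const_def mult_ac)
  finally show ?thesis
    using \<xi> E(3) near_field_const_nonneg[OF \<alpha>(1)]
    by (simp add: ennreal_plus[symmetric] ennreal_mult[symmetric] add.assoc del: ennreal_plus)
qed

lemma riesz_potential_ball_ge:
  fixes x :: "'a::euclidean_space" and \<alpha> :: real
  assumes x: "x \<in> ball 0 1" and \<alpha>: "\<alpha> < DIM('a)"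
  shows "ennreal (2 powr - (DIM('a) - \<alpha>) * unit_ball_vol DIM('a)) \<le> riesz_potential \<alpha> (ball 0 1) x"
proof -
  have "ennreal (2 powr - (DIM('a) - \<alpha>) * unit_ball_vol DIM('a))
      = ennreal (2 powr - (DIM('a) - \<alpha>)) * emeasure lebesgue (ball (0::'a) 1 - {x})"
    \<comment> \<open>at \<open>y = x\<close> the kernel is \<open>0 powr _ = 0\<close>, so that point has to be removed\<close>
    by (simp add: emeasure_Diff_null_set emeasure_ball ennreal_mult)
  also have "\<dots> = (\<integral>\<^sup>+y. ennreal (2 powr - (DIM('a) - \<alpha>)) * indicator (ball 0 1 - {x}) y \<partial>lebesgue)"
    by (simp add: nn_integral_cmult_indicator)
  also have "\<dots> \<le> riesz_potential \<alpha> (ball 0 1) x"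
    unfolding riesz_potential_def
  proof (intro nn_integral_mono)
    fix y :: 'a
    show "ennreal (2 powr - (DIM('a) - \<alpha>)) * indicator (ball 0 1 - {x}) y
        \<le> ennreal (indicator (ball 0 1) y * norm (y - x) powr - (DIM('a) - \<alpha>))"
    proof (cases "y \<in> ball 0 1 - {x}")
      case True
      have "norm (y - x) \<le> norm y + norm x"
        by (rule norm_triangle_ineq4)
      also have "\<dots> \<le> 2"
        using True x by auto
      finally have "2 powr - (DIM('a) - \<alpha>) \<le> norm (y - x) powr - (DIM('a) - \<alpha>)"
        using True \<alpha> by (intro powr_mono2') auto
      then show ?thesis
        using True by (simp add: ennreal_leI)
    qed simp
  qed
  finally show ?thesis .
qed

lemma nn_integral_riesz_potential_le:
  fixes E :: "'a::euclidean_space set"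
  assumes "E \<in> sets lebesgue" "\<And>x. x \<in> E \<Longrightarrow> riesz_potential \<alpha> E x \<le> U"
  shows "(\<integral>\<^sup>+x. riesz_potential \<alpha> E x * indicator E x \<partial>lebesgue) \<le> U * emeasure lebesgue E"
proof -
  have "(\<integral>\<^sup>+x. riesz_potential \<alpha> E x * indicator E x \<partial>lebesgue) \<le> (\<integral>\<^sup>+x. U * indicator E x \<partial>lebesgue)"
    using assms(2) by (intro nn_integral_mono) (simp add: indicator_def)
  then show ?thesis
    using assms(1) by (simp add: nn_integral_cmult_indicator)
qed

lemma rieszF_eq_riesz_potential:
  fixes E :: "(real ^ 'n) set"
  shows "rieszF \<alpha> E = enn2real (\<integral>\<^sup>+x. riesz_potential \<alpha> E x * indicator E x \<partial>lebesgue)"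
  unfolding rieszF_def riesz_potential_def
  by (intro arg_cong[where f = enn2real] nn_integral_cong) (simp add: indicator_def)

lemma rieszF_le:
  fixes E :: "(real ^ 'n) set"
  assumes "E \<in> sets lebesgue" "emeasure lebesgue E < \<infinity>"
    and "U \<ge> 0" "\<And>x. x \<in> E \<Longrightarrow> riesz_potential \<alpha> E x \<le> ennreal U"
  shows "rieszF \<alpha> E \<le> U * measure lebesgue E"
  using nn_integral_riesz_potential_le[OF assms(1,4)] assms(2,3)
  by (auto simp: rieszF_eq_riesz_potential emeasure_eq_ennreal_measure ennreal_mult[symmetric]
      intro!: enn2real_leI)

lemma rieszF_ge:
  fixes E :: "(real ^ 'n) set"
  assumes "E \<in> sets lebesgue" "emeasure lebesgue E < \<infinity>"
    and "L \<ge> 0" "\<And>x. x \<in> E \<Longrightarrow> ennreal L \<le> riesz_potential \<alpha> E x"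
    and "\<And>x. x \<in> E \<Longrightarrow> riesz_potential \<alpha> E x \<le> ennreal U"
  shows "L * measure lebesgue E \<le> rieszF \<alpha> E"
proof -
  let ?I = "\<integral>\<^sup>+x. riesz_potential \<alpha> E x * indicator E x \<partial>lebesgue"
  have "ennreal L * emeasure lebesgue E = (\<integral>\<^sup>+x. ennreal L * indicator E x \<partial>lebesgue)"
    using assms(1) by (simp add: nn_integral_cmult_indicator)
  also have "\<dots> \<le> ?I"
    using assms(4) by (intro nn_integral_mono) (simp add: indicator_def)
  finally have lower: "ennreal (L * measure lebesgue E) \<le> ?I"
    using assms(2,3) by (simp add: emeasure_eq_ennreal_measure ennreal_mult)
  have "?I \<le> ennreal U * emeasure lebesgue E"
    using assms(1,5) by (rule nn_integral_riesz_potential_le)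
  also have "\<dots> < \<infinity>"
    using assms(2) by (simp add: ennreal_mult_less_top)
  finally have "enn2real (ennreal (L * measure lebesgue E)) \<le> enn2real ?I"
    using lower by (intro enn2real_mono) auto
  then show ?thesis
    using assms(3) by (simp add: rieszF_eq_riesz_potential)
qed

lemma rieszF_ball_ge:
  fixes \<alpha> :: real
  assumes \<alpha>: "0 < \<alpha>" "\<alpha> < CARD('n::finite)"
  shows "2 powr - (CARD('n) - \<alpha>) * (measure lebesgue (ball (0::real ^ 'n) 1))\<^sup>2
    \<le> rieszF \<alpha> (ball (0::real ^ 'n) 1)"
proof -
  let ?B = "ball (0::real ^ 'n) 1"
  let ?\<omega> = "unit_ball_vol CARD('n)"
  have B: "?B \<in> sets lebesgue" "emeasure lebesgue ?B = ennreal ?\<omega>" "measure lebesgue ?B = ?\<omega>"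
    by (simp_all add: emeasure_ball content_ball)
  have \<omega>: "?\<omega> \<ge> 0"
    by simp
  have \<alpha>': "\<alpha> < DIM(real ^ 'n)"
    using \<alpha> by simp
  obtain C :: "(real ^ 'n) set" where C: "finite C" "\<And>x. ball x 1 \<subseteq> (\<Union>c\<in>C. ball (x + c) 1)"
    using finite_unit_ball_cover by blast
  have "emeasure lebesgue (?B \<inter> ball a 1) \<le> ennreal ?\<omega>" for a
    using emeasure_mono[of "?B \<inter> ball a 1" "ball a 1" lebesgue] by (simp add: emeasure_ball)
  note upper = riesz_potential_le[OF B(1) eq_refl[OF B(2)] \<omega> \<alpha>(1) \<alpha>' order.refl C \<omega> this]
  show ?thesis
    using rieszF_ge[OF B(1) _ _ riesz_potential_ball_ge[OF _ \<alpha>'] upper] B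
    by (simp add: power2_eq_square mult_ac)
qed

lemma rieszF_le_local_mass:
  fixes E C :: "(real ^ 'n) set" and \<alpha> \<xi> R M :: real
  assumes E: "E \<in> sets lebesgue" "emeasure lebesgue E \<le> ennreal M" "M \<ge> 0"
    and \<alpha>: "0 < \<alpha>" "\<alpha> < CARD('n)" and R: "R \<ge> 1"
    and C: "finite C" "\<And>x. ball x R \<subseteq> (\<Union>c\<in>C. ball (x + c) 1)"
    and \<xi>: "\<xi> \<ge> 0" "\<And>a. emeasure lebesgue (E \<inter> ball a 1) \<le> ennreal \<xi>"
  shows "rieszF \<alpha> E \<le> (R powr - (CARD('n) - \<alpha>) * M + card C * \<xi>
           + near_field_const CARD('n) \<alpha> * \<xi> powr (\<alpha> / (2 * CARD('n)))) * M"
    (is "_ \<le> ?U * M")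
proof -
  have U: "?U \<ge> 0"
    using E(3) \<xi>(1) near_field_const_nonneg[OF \<alpha>(1)] by simp
  have "\<alpha> < DIM(real ^ 'n)"
    using \<alpha> by simp
  then have "riesz_potential \<alpha> E x \<le> ennreal ?U" for x
    using riesz_potential_le[OF E \<alpha>(1) _ R C \<xi>] by simp
  moreover have "emeasure lebesgue E < \<infinity>"
    unfolding infinity_ennreal_def using E(2) ennreal_less_top by (rule le_less_trans)
  ultimately have "rieszF \<alpha> E \<le> ?U * measure lebesgue E"
    using E(1) U by (intro rieszF_le)
  also have "\<dots> \<le> ?U * M"
    using E(2,3) U by (intro mult_left_mono) (simp_all add: measure_def enn2real_leI)
  finally show ?thesis .
qed

lemma rieszF_uniformly_small:
  fixes \<alpha> \<epsilon> M :: real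
  assumes \<alpha>: "0 < \<alpha>" "\<alpha> < CARD('n::finite)" and \<epsilon>: "\<epsilon> > 0" and M: "M \<ge> 0"
  shows "\<exists>\<xi>>0. \<forall>E :: (real ^ 'n) set. E \<in> sets lebesgue \<and> emeasure lebesgue E \<le> ennreal M
           \<and> (\<forall>a. emeasure lebesgue (E \<inter> ball a 1) \<le> ennreal \<xi>) \<longrightarrow> rieszF \<alpha> E < \<epsilon>"
proof -
  define \<theta> where "\<theta> = \<alpha> / (2 * CARD('n))"
  define c where "c = near_field_const CARD('n) \<alpha>"
  have "((\<lambda>R. R powr - (CARD('n) - \<alpha>) * M * M) \<longlongrightarrow> 0 * M * M) at_top"
    using \<alpha> by (intro tendsto_intros tendsto_neg_powr filterlim_ident) auto
  then have "\<forall>\<^sub>F R in at_top. R \<ge> 1 \<and> R powr - (CARD('n) - \<alpha>) * M * M < \<epsilon> / 2"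
    using \<epsilon> by (intro eventually_conj eventually_ge_at_top order_tendstoD(2)) auto
  then obtain R where R: "R \<ge> 1" "R powr - (CARD('n) - \<alpha>) * M * M < \<epsilon> / 2"
    by (auto dest: eventually_happens'[OF trivial_limit_at_top_linorder])
  obtain C :: "(real ^ 'n) set" where C: "finite C" "\<And>x. ball x R \<subseteq> (\<Union>c\<in>C. ball (x + c) 1)"
    using finite_unit_ball_cover by blast
  have "\<forall>\<^sub>F \<xi> in at_right (0::real). 0 \<le> \<xi>"
    using eventually_at_right_less by (rule eventually_mono) simp
  then have powr_lim: "((\<lambda>\<xi>::real. \<xi> powr \<theta>) \<longlongrightarrow> 0) (at_right 0)"
    using \<alpha> by (intro tendsto_zero_powrI[where b = \<theta>] tendsto_ident_at tendsto_const) (auto simp: \<theta>_def)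
  have "((\<lambda>\<xi>::real. (card C * \<xi> + c * \<xi> powr \<theta>) * M) \<longlongrightarrow> (real (card C) * 0 + c * 0) * M) (at_right 0)"
    by (intro tendsto_mult_right tendsto_add tendsto_mult_left tendsto_ident_at powr_lim)
  then have "\<forall>\<^sub>F \<xi> in at_right (0::real). \<xi> > 0 \<and> (card C * \<xi> + c * \<xi> powr \<theta>) * M < \<epsilon> / 2"
    using \<epsilon> by (intro eventually_conj eventually_at_right_less order_tendstoD(2)) auto
  then obtain \<xi> :: real where \<xi>: "\<xi> > 0" "(card C * \<xi> + c * \<xi> powr \<theta>) * M < \<epsilon> / 2"
    by (auto dest: eventually_happens'[OF trivial_limit_at_right_real])
  have "rieszF \<alpha> E < \<epsilon>" if "E \<in> sets lebesgue" "emeasure lebesgue E \<le> ennreal M"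
    and "\<And>a. emeasure lebesgue (E \<inter> ball a 1) \<le> ennreal \<xi>" for E :: "(real ^ 'n) set"
    using rieszF_le_local_mass[OF that(1,2) M \<alpha> R(1) C less_imp_le[OF \<xi>(1)] that(3)] R(2) \<xi>(2)
    by (simp add: c_def \<theta>_def algebra_simps)
  with \<xi>(1) show ?thesis
    by blast
qed

lemma emeasure_Int_ball_le_asym:
  fixes E :: "(real ^ 'n) set"
  assumes E: "E \<in> sets lebesgue" "emeasure lebesgue E = emeasure lebesgue (ball (0::real ^ 'n) 1)"
    and asym: "asym E \<ge> 2 * (measure lebesgue (ball (0::real ^ 'n) 1) - \<xi>)"
  shows "emeasure lebesgue (E \<inter> ball a 1) \<le> ennreal \<xi>"
proof -
  have E_lmeasurable: "E \<in> lmeasurable"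
    using E by (simp add: fmeasurableI emeasure_ball)
  have "asym E \<le> measure lebesgue ((ball a 1 - E) \<union> (E - ball a 1))"
    unfolding asym_def by (rule cINF_lower) (auto intro: bdd_belowI[where m = 0])
  also have "\<dots> = measure lebesgue (ball a 1) + measure lebesgue E - 2 * measure lebesgue (E \<inter> ball a 1)"
    using measure_symmetric_difference[OF lmeasurable_ball E_lmeasurable] by (simp add: Int_commute)
  also have "\<dots> = 2 * measure lebesgue (ball (0::real ^ 'n) 1) - 2 * measure lebesgue (E \<inter> ball a 1)"
    using E(2) by (simp add: measure_def emeasure_ball)
  finally have "measure lebesgue (E \<inter> ball a 1) \<le> \<xi>"
    using asym by simp
  then show ?thesis
    using emeasure_eq_measure2[OF fmeasurable_Int_fmeasurable[OF E_lmeasurable]] by (simp add: ennreal_leI)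
qed

lemma deficit_threshold_less:
  fixes \<omega> p :: real
  assumes "\<omega> > 0" "0 < p" "p < N"
  shows "\<omega>\<^sup>2 / 5 ^ N * (1 - 1 / 2 powr p) < 2 powr - p * \<omega>\<^sup>2"
proof -
  have "2 powr p < 2 powr N"
    using assms by (intro powr_less_mono) auto
  also have "\<dots> \<le> 5 ^ N"
    by (simp add: powr_realpow power_mono)
  finally have "\<omega>\<^sup>2 / 5 ^ N < \<omega>\<^sup>2 / 2 powr p"
    using assms by (intro divide_strict_left_mono) auto
  moreover have "\<omega>\<^sup>2 / 5 ^ N * (1 - 1 / 2 powr p) \<le> \<omega>\<^sup>2 / 5 ^ N"
    by (intro mult_left_le) auto
  ultimately show ?thesis
    by (simp add: powr_minus_divide)
qed

theorem lemma2p7: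
  fixes \<alpha> :: real
  assumes "CARD('n::finite) \<ge> 2" and "1 < \<alpha>" and "\<alpha> < real CARD('n)"
  shows "\<exists>\<xi>>0. \<forall>E :: (real ^ 'n) set.
           E \<in> sets lebesgue \<and> emeasure lebesgue E = emeasure lebesgue (ball (0::real^'n) 1)
           \<and> asym E \<ge> 2 * (measure lebesgue (ball (0::real^'n) 1) - \<xi>)
           \<longrightarrow> deficit \<alpha> E > (measure lebesgue (ball (0::real^'n) 1))\<^sup>2 / 5 ^ CARD('n)
                 * (1 - 1 / 2 powr (real CARD('n) - \<alpha>))"
proof -
  let ?B = "ball (0::real ^ 'n) 1"
  let ?\<omega> = "measure lebesgue ?B"
  let ?T = "?\<omega>\<^sup>2 / 5 ^ CARD('n) * (1 - 1 / 2 powr (real CARD('n) - \<alpha>))"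
  have \<alpha>: "0 < \<alpha>" "\<alpha> < CARD('n)"
    using assms by auto
  have \<omega>: "?\<omega> > 0" "emeasure lebesgue ?B = ennreal ?\<omega>"
    by (simp_all add: content_ball emeasure_ball)
  have "?T < 2 powr - (CARD('n) - \<alpha>) * ?\<omega>\<^sup>2"
    using \<alpha> \<omega> by (intro deficit_threshold_less) auto
  also have "\<dots> \<le> rieszF \<alpha> ?B"
    using rieszF_ball_ge[OF \<alpha>] .
  finally obtain \<xi> where \<xi>: "\<xi> > 0" and small: "\<And>E :: (real ^ 'n) set. E \<in> sets lebesgue
      \<Longrightarrow> emeasure lebesgue E \<le> ennreal ?\<omega> \<Longrightarrow> (\<forall>a. emeasure lebesgue (E \<inter> ball a 1) \<le> ennreal \<xi>)
      \<Longrightarrow> rieszF \<alpha> E < rieszF \<alpha> ?B - ?T"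
    using rieszF_uniformly_small[OF \<alpha>, of "rieszF \<alpha> ?B - ?T" ?\<omega>] \<omega>(1) by auto
  have "deficit \<alpha> E > ?T"
    if "E \<in> sets lebesgue" "emeasure lebesgue E = emeasure lebesgue ?B" "asym E \<ge> 2 * (?\<omega> - \<xi>)"
    for E :: "(real ^ 'n) set"
    using small[OF that(1)] emeasure_Int_ball_le_asym[OF that] that(2) \<omega>(2) by (simp add: deficit_def)
  with \<xi> show ?thesis
    by blast
qed

end
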